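(* Let $(A,I)$ be a transversal prism and $m,n\ge0$. For $x\in W_m(A/I_n)$ with ghost coordinates $(w_0,\dots,w_m)$, the transversal coordinates $(t_0,\dots,t_{m+n})$ of $c(x)\in A/I_{m+n}$ are \[ c(x)=(\underbrace{w_m,\dots,w_m}_{n+1\text{ times}},\phi(w_{m-1}),\phi^2(w_{m-2}),\dots,\phi^m(w_0)), \] i.e.\ $t_j$ is the image of $w_m$ in $A/\phi^j(I)$ for $0\le j\le n$, and $t_{n+k}$ is the image of $\phi^k(w_{m-k})$ in $A/\phi^{n+k}(I)$ for $1\le k\le m$.
   Context: A prism $(A,I)$: a $\delta$-ring $A$ (with Frobenius lift $\phi(x)=x^p+p\delta(x)$), ideal $I$ defining a Cartier divisor, $A$ derived $(p,I)$-complete, $p\in I+\phi(I)A$; transversal means $A/I$ is $p$-torsionfree. $I_n=I\phi(I)\cdots\phi^n(I)A$. For transversal prisms the map $A/I_n\to\prod_{i=0}^nA/\phi^i(I)A$ is injective; its components $(t_0,\dots,t_n)$ are the transversal coordinates. The $C_{p^\infty}$-Tambara functor $\underline A$ has value $A/I_n$ at $C_{p^n}$ and structure maps given in transversal coordinates by $F(t_0,\dots,t_n)=(t_0,\dots,t_{n-1})$, $V(t_0,\dots,t_{n-1})=(pt_0,\dots,pt_{n-1},0)$, $N(t_0,\dots,t_{n-1})=(t_0^p,\dots,t_{n-1}^p,\phi(t_{n-1}))$; $V^k_j,N^k_j$ are composites from level $j$ to $k$. $W_m(R)$ denotes $p$-typical Witt vectors with Witt coordinates $(a_0,\dots,a_m)$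 and ghost coordinates $w_i=\sum_{k=0}^ip^ka_k^{p^{i-k}}$. The comparison map $c\colon W_m(A/I_n)\to A/I_{m+n}$ is $c(a_0,\dots,a_m)=\sum_{i=0}^mV^{m+n}_{m+n-i}N^{m+n-i}_n(a_i)$. *)

theory Defs
  imports Main "HOL-Computational_Algebra.Primes"
begin

definition is_ideal :: "'a::comm_ring_1 set \<Rightarrow> bool" where
  "is_ideal J \<longleftrightarrow> 0 \<in> J \<and> (\<forall>x\<in>J. \<forall>y\<in>J. x + y \<in> J) \<and> (\<forall>r. \<forall>x\<in>J. r * x \<in> J)"

definition ideal_gen :: "'a::comm_ring_1 set \<Rightarrow> 'a set" where
  "ideal_gen S = \<Inter>{J. is_ideal J \<and> S \<subseteq> J}"

definition phi :: "nat \<Rightarrow> ('a::comm_ring_1 \<Rightarrow> 'a) \<Rightarrow> 'a \<Rightarrow> 'a" where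
  "phi p \<delta> x = x ^ p + of_nat p * \<delta> x"

definition delta_ring :: "nat \<Rightarrow> ('a::comm_ring_1 \<Rightarrow> 'a) \<Rightarrow> bool" where
  "delta_ring p \<delta> \<longleftrightarrow> prime p \<and> \<delta> 0 = 0 \<and> \<delta> 1 = 0 \<and>
     (\<forall>x y. \<delta> (x * y) = x ^ p * \<delta> y + y ^ p * \<delta> x + of_nat p * \<delta> x * \<delta> y) \<and>
     (\<forall>x y. \<delta> (x + y) = \<delta> x + \<delta> y
              - (\<Sum>i\<in>{1..<p}. of_nat ((p choose i) div p) * x ^ i * y ^ (p - i)))"

text \<open>Derived completeness of A with respect to a single element f:
  R Hom(A_f, A) = 0, i.e. the map (x_k) \<mapsto> (x_k - f x_(k+1)) on A^N is bijective.\<close>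
definition derived_complete_elt :: "'a::comm_ring_1 \<Rightarrow> bool" where
  "derived_complete_elt f \<longleftrightarrow> (\<forall>y :: nat \<Rightarrow> 'a. \<exists>!x :: nat \<Rightarrow> 'a. \<forall>k. x k - f * x (Suc k) = y k)"

definition derived_complete :: "'a::comm_ring_1 set \<Rightarrow> bool" where
  "derived_complete J \<longleftrightarrow> (\<forall>f\<in>J. derived_complete_elt f)"

text \<open>I defines a Cartier divisor: I is locally (on a finite cover of Spec A by
  basic opens D(g)) generated by a nonzerodivisor.\<close>
definition cartier_divisor :: "'a::comm_ring_1 set \<Rightarrow> bool" where
  "cartier_divisor I \<longleftrightarrow> is_ideal I \<and>
     (\<exists>F. finite F \<and> ideal_gen F = UNIV \<and>
        (\<forall>g\<in>F. \<exists>d\<in>I.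
            (\<forall>b. (\<exists>k. g ^ k * d * b = 0) \<longrightarrow> (\<exists>k. g ^ k * b = 0)) \<and>
            (\<forall>x\<in>I. \<exists>b k. g ^ k * x = d * b)))"

definition phiI :: "nat \<Rightarrow> ('a::comm_ring_1 \<Rightarrow> 'a) \<Rightarrow> 'a set \<Rightarrow> nat \<Rightarrow> 'a set" where
  "phiI p \<delta> I i = ideal_gen ((phi p \<delta> ^^ i) ` I)"

definition In :: "nat \<Rightarrow> ('a::comm_ring_1 \<Rightarrow> 'a) \<Rightarrow> 'a set \<Rightarrow> nat \<Rightarrow> 'a set" where
  "In p \<delta> I n = ideal_gen {\<Prod>i\<le>n. (phi p \<delta> ^^ i) (x i) | x. \<forall>i\<le>n. x i \<in> I}"

definition prism :: "nat \<Rightarrow> ('a::comm_ring_1 \<Rightarrow> 'a) \<Rightarrow> 'a set \<Rightarrow> bool" where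
  "prism p \<delta> I \<longleftrightarrow> delta_ring p \<delta> \<and> is_ideal I \<and> cartier_divisor I \<and>
     derived_complete (ideal_gen (insert (of_nat p) I)) \<and>
     (\<exists>x\<in>I. \<exists>y\<in>phiI p \<delta> I 1. of_nat p = x + y)"

definition transversal_prism :: "nat \<Rightarrow> ('a::comm_ring_1 \<Rightarrow> 'a) \<Rightarrow> 'a set \<Rightarrow> bool" where
  "transversal_prism p \<delta> I \<longleftrightarrow> prism p \<delta> I \<and> (\<forall>a. of_nat p * a \<in> I \<longrightarrow> a \<in> I)"

text \<open>Elements of A/I_n are represented by elements of A. The transversal coordinates
  of (the class of) y in A/I_n are the images of y in A/phi^i(I)A, i \<le> n.
  V and N are the maps given in transversal coordinates; since the transversal-coordinate
  map is injective, they are determined by these coordinates.\<close>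

definition Vstep :: "nat \<Rightarrow> ('a::comm_ring_1 \<Rightarrow> 'a) \<Rightarrow> 'a set \<Rightarrow> nat \<Rightarrow> 'a \<Rightarrow> 'a" where
  "Vstep p \<delta> I n a = (SOME y. (\<forall>i\<le>n. y - of_nat p * a \<in> phiI p \<delta> I i) \<and> y \<in> phiI p \<delta> I (Suc n))"

definition Nstep :: "nat \<Rightarrow> ('a::comm_ring_1 \<Rightarrow> 'a) \<Rightarrow> 'a set \<Rightarrow> nat \<Rightarrow> 'a \<Rightarrow> 'a" where
  "Nstep p \<delta> I n a = (SOME y. (\<forall>i\<le>n. y - a ^ p \<in> phiI p \<delta> I i) \<and> y - phi p \<delta> a \<in> phiI p \<delta> I (Suc n))"

text \<open>Vcomp j d = V^(j+d)_j and Ncomp j d = N^(j+d)_j (composites from level j to level j+d).\<close>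
fun Vcomp :: "nat \<Rightarrow> ('a::comm_ring_1 \<Rightarrow> 'a) \<Rightarrow> 'a set \<Rightarrow> nat \<Rightarrow> nat \<Rightarrow> 'a \<Rightarrow> 'a" where
  "Vcomp p \<delta> I j 0 a = a"
| "Vcomp p \<delta> I j (Suc d) a = Vstep p \<delta> I (j + d) (Vcomp p \<delta> I j d a)"

fun Ncomp :: "nat \<Rightarrow> ('a::comm_ring_1 \<Rightarrow> 'a) \<Rightarrow> 'a set \<Rightarrow> nat \<Rightarrow> nat \<Rightarrow> 'a \<Rightarrow> 'a" where
  "Ncomp p \<delta> I j 0 a = a"
| "Ncomp p \<delta> I j (Suc d) a = Nstep p \<delta> I (j + d) (Ncomp p \<delta> I j d a)"

definition ghost :: "nat \<Rightarrow> (nat \<Rightarrow> 'a::comm_ring_1) \<Rightarrow> nat \<Rightarrow> 'a" where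
  "ghost p a i = (\<Sum>k\<le>i. of_nat p ^ k * a k ^ (p ^ (i - k)))"

definition cmap :: "nat \<Rightarrow> ('a::comm_ring_1 \<Rightarrow> 'a) \<Rightarrow> 'a set \<Rightarrow> nat \<Rightarrow> nat \<Rightarrow> (nat \<Rightarrow> 'a) \<Rightarrow> 'a" where
  "cmap p \<delta> I m n a = (\<Sum>i\<le>m. Vcomp p \<delta> I (m + n - i) i (Ncomp p \<delta> I n (m - i) (a i)))"

end

theory Submission
  imports Defs "HOL-Library.Set_Algebras"
begin

text \<open>
  In transversal coordinates, V^i multiplies the coordinates it keeps by p^i and kills the
  new ones, while N^d raises the first n+1 coordinates to the power p^d and puts
  phi^k(a)^(p^(d-k)) into coordinate n+k. Hence the i-th summand of c(a) is congruent to
  p^i a_i^(p^(m-i)) in the coordinates j \<le> n, which sum to w_m, and to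
  p^i phi^k(a_i)^(p^(m-k-i)) (or to 0 if i > m-k) in coordinate n+k, which sum to
  phi^k(w_(m-k)).

  The substance is that the congruences specifying V and N are solvable, i.e. that
  p \<in> I_n + phi^(n+1)(I)A. Write J_k (phiI_pth_powers) for the ideal generated by the
  phi^k(z)^p, z \<in> I. From p \<in> I + phi(I)A, phi(z) = z^p + p delta(z), transversality and
  the fact that 1 + (p,I) consists of units, p is a unit multiple of an element of
  J_0 + phi(I)A; applying phi^n gives p \<in> J_n + phi^(n+1)(I)A. As
  J_(k+1) \<subseteq> J_k + p^p A and 1 - p^(p-1) c is a unit, p descends to J_k + phi^(n+1)(I)A
  for every k \<le> n. Finally J_k \<subseteq> I_k + phi^(n+1)(I)A by induction on k, using the
  previous step to replace p by an element of J_k inside phi^(k+1)(z) = phi^k(z)^p + p delta(phi^k(z)).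
\<close>

section \<open>Ideals\<close>

lemma is_ideal_ideal_gen: "is_ideal (ideal_gen S)"
  unfolding is_ideal_def ideal_gen_def by auto

lemma subset_ideal_gen: "S \<subseteq> ideal_gen S"
  unfolding ideal_gen_def by auto

lemma ideal_gen_least: "is_ideal J \<Longrightarrow> S \<subseteq> J \<Longrightarrow> ideal_gen S \<subseteq> J"
  unfolding ideal_gen_def by auto

lemma is_ideal_zero: "is_ideal J \<Longrightarrow> 0 \<in> J"
  by (simp add: is_ideal_def)

lemma is_ideal_add: "is_ideal J \<Longrightarrow> x \<in> J \<Longrightarrow> y \<in> J \<Longrightarrow> x + y \<in> J"
  by (simp add: is_ideal_def)

lemma is_ideal_mult_left: "is_ideal J \<Longrightarrow> x \<in> J \<Longrightarrow> r * x \<in> J"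
  by (simp add: is_ideal_def)

lemma is_ideal_mult_right: "is_ideal J \<Longrightarrow> x \<in> J \<Longrightarrow> x * r \<in> J"
  by (metis is_ideal_mult_left mult.commute)

lemma is_ideal_uminus: "is_ideal J \<Longrightarrow> x \<in> J \<Longrightarrow> - x \<in> J"
  using is_ideal_mult_left[of J x "- 1"] by simp

lemma is_ideal_power: "is_ideal J \<Longrightarrow> x \<in> J \<Longrightarrow> n \<noteq> 0 \<Longrightarrow> x ^ n \<in> J"
  by (cases n) (auto intro: is_ideal_mult_right)

lemma is_ideal_sum: "is_ideal J \<Longrightarrow> (\<And>i. i \<in> A \<Longrightarrow> f i \<in> J) \<Longrightarrow> sum f A \<in> J"
  by (induction A rule: infinite_finite_induct) (auto simp: is_ideal_zero is_ideal_add)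

lemma is_ideal_sum_diff:
  "is_ideal J \<Longrightarrow> (\<And>i. i \<in> A \<Longrightarrow> f i - g i \<in> J) \<Longrightarrow> sum f A - sum g A \<in> J"
  using is_ideal_sum[of J A "\<lambda>i. f i - g i"] by (simp add: sum_subtractf)

lemma is_ideal_mult_diff: "is_ideal J \<Longrightarrow> a - b \<in> J \<Longrightarrow> c * a - c * b \<in> J"
  using is_ideal_mult_left[of J "a - b" c] by (simp add: algebra_simps)

lemma is_ideal_power_diff: "is_ideal J \<Longrightarrow> a - b \<in> J \<Longrightarrow> a ^ n - b ^ n \<in> J"
proof (induction n)
  case 0
  then show ?case by (simp add: is_ideal_zero)
next
  case (Suc n)
  have "a ^ Suc n - b ^ Suc n = a * (a ^ n - b ^ n) + (a - b) * b ^ n"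
    by (simp add: algebra_simps)
  with Suc show ?case by (simp add: is_ideal_add is_ideal_mult_left is_ideal_mult_right)
qed

lemma is_ideal_set_plus:
  assumes "is_ideal X" "is_ideal Y"
  shows "is_ideal (X + Y)"
  unfolding is_ideal_def
proof (intro conjI ballI allI)
  show "0 \<in> X + Y"
    using set_plus_intro[OF is_ideal_zero[OF assms(1)] is_ideal_zero[OF assms(2)]] by simp
next
  fix u v assume "u \<in> X + Y" "v \<in> X + Y"
  then obtain x y x' y' where "u = x + y" "v = x' + y'" "x \<in> X" "y \<in> Y" "x' \<in> X" "y' \<in> Y"
    by (metis set_plus_elim)
  then have "u + v = (x + x') + (y + y')" "x + x' \<in> X" "y + y' \<in> Y"
    using assms by (simp_all add: algebra_simps is_ideal_add)
  then show "u + v \<in> X + Y" by (metis set_plus_intro)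
next
  fix r v assume "v \<in> X + Y"
  then obtain x y where "v = x + y" "x \<in> X" "y \<in> Y"
    by (metis set_plus_elim)
  then have "r * v = r * x + r * y" "r * x \<in> X" "r * y \<in> Y"
    using assms by (simp_all add: distrib_left is_ideal_mult_left)
  then show "r * v \<in> X + Y" by (metis set_plus_intro)
qed

lemma is_ideal_range_mult: "is_ideal (range ((*) q))"
  unfolding is_ideal_def
proof (intro conjI ballI allI)
  show "0 \<in> range ((*) q)"
    using rangeI[of "(*) q" 0] by simp
next
  fix u v assume "u \<in> range ((*) q)" "v \<in> range ((*) q)"
  then obtain a b where "u = q * a" "v = q * b" by blast
  then show "u + v \<in> range ((*) q)"
    using rangeI[of "(*) q" "a + b"] by (simp add: distrib_left)
next
  fix r v assume "v \<in> range ((*) q)"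
  then obtain b where "v = q * b" by blast
  then show "r * v \<in> range ((*) q)"
    using rangeI[of "(*) q" "r * b"] by (simp add: mult.left_commute)
qed

lemma is_ideal_vimage_mult: "is_ideal J \<Longrightarrow> is_ideal {f. f * v \<in> J}"
  unfolding is_ideal_def by (simp add: distrib_right mult.assoc)

section \<open>Ring endomorphisms and the Frobenius lift\<close>

definition ring_endo :: "('a::comm_ring_1 \<Rightarrow> 'a) \<Rightarrow> bool" where
  "ring_endo f \<longleftrightarrow> (\<forall>x y. f (x + y) = f x + f y) \<and> (\<forall>x y. f (x * y) = f x * f y) \<and> f 1 = 1"

lemma ring_endo_add: "ring_endo f \<Longrightarrow> f (x + y) = f x + f y"
  by (simp add: ring_endo_def)

lemma ring_endo_mult: "ring_endo f \<Longrightarrow> f (x * y) = f x * f y"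
  by (simp add: ring_endo_def)

lemma ring_endo_one: "ring_endo f \<Longrightarrow> f 1 = 1"
  by (simp add: ring_endo_def)

lemma ring_endo_zero: "ring_endo f \<Longrightarrow> f 0 = 0"
  using ring_endo_add[of f 0 0] by simp

lemma ring_endo_uminus: "ring_endo f \<Longrightarrow> f (- x) = - f x"
  using ring_endo_add[of f x "- x"] ring_endo_zero[of f] minus_unique[of "f x" "f (- x)"] by simp

lemma ring_endo_diff: "ring_endo f \<Longrightarrow> f (x - y) = f x - f y"
  using ring_endo_add[of f x "- y"] ring_endo_uminus[of f y] by simp

lemma ring_endo_of_nat: "ring_endo f \<Longrightarrow> f (of_nat n) = of_nat n"
  by (induction n) (simp_all add: ring_endo_zero ring_endo_add ring_endo_one)

lemma ring_endo_power: "ring_endo f \<Longrightarrow> f (x ^ n) = f x ^ n"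
  by (induction n) (simp_all add: ring_endo_one ring_endo_mult)

lemma ring_endo_sum: "ring_endo f \<Longrightarrow> f (sum g A) = (\<Sum>i\<in>A. f (g i))"
  by (induction A rule: infinite_finite_induct) (simp_all add: ring_endo_zero ring_endo_add)

lemma ring_endo_funpow: "ring_endo f \<Longrightarrow> ring_endo (f ^^ k)"
  by (induction k) (simp_all add: ring_endo_def)

lemma ring_endo_ideal_gen:
  assumes "ring_endo f" "x \<in> ideal_gen S"
  shows "f x \<in> ideal_gen (f ` S)"
proof -
  have "is_ideal {x. f x \<in> ideal_gen (f ` S)}"
    using assms(1) is_ideal_ideal_gen[of "f ` S"]
    by (simp add: is_ideal_def ring_endo_zero ring_endo_add ring_endo_mult)
  moreover have "S \<subseteq> {x. f x \<in> ideal_gen (f ` S)}"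
    using subset_ideal_gen by blast
  ultimately show ?thesis
    using ideal_gen_least assms(2) by blast
qed

lemma ring_endo_ghost: "ring_endo f \<Longrightarrow> f (ghost p a i) = ghost p (f \<circ> a) i"
  by (simp add: ghost_def ring_endo_sum ring_endo_mult ring_endo_power ring_endo_of_nat)

lemma ghost_eq_sum_if:
  assumes "l \<le> m"
  shows "(\<Sum>i\<le>m. if i \<le> l then of_nat p ^ i * b i ^ p ^ (l - i) else 0) = ghost p b l"
proof -
  have "{i \<in> {..m}. i \<le> l} = {..l}"
    using assms by auto
  then show ?thesis
    unfolding ghost_def by (simp flip: sum.inter_filter)
qed

lemma ring_endo_phi:
  assumes "delta_ring p \<delta>"
  shows "ring_endo (phi p \<delta>)"
proof -
  have p: "prime p" and "\<delta> 1 = 0"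
    and \<delta>_mult: "\<And>x y. \<delta> (x * y) = x ^ p * \<delta> y + y ^ p * \<delta> x + of_nat p * \<delta> x * \<delta> y"
    and \<delta>_add: "\<And>x y. \<delta> (x + y) = \<delta> x + \<delta> y
              - (\<Sum>i\<in>{1..<p}. of_nat ((p choose i) div p) * x ^ i * y ^ (p - i))"
    using assms by (auto simp: delta_ring_def)
  have "p \<noteq> 0"
    using p by auto
  have "phi p \<delta> (x + y) = phi p \<delta> x + phi p \<delta> y" for x y :: 'a
  proof -
    have "of_nat (p choose i) = (of_nat p * of_nat ((p choose i) div p) :: 'a)" if "i \<in> {1..<p}" for i
      using that p dvd_choose_prime[of i p] by (simp flip: of_nat_mult)
    then have binomial_middle: "(\<Sum>i\<in>{1..<p}. of_nat (p choose i) * x ^ i * y ^ (p - i))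
        = of_nat p * (\<Sum>i\<in>{1..<p}. of_nat ((p choose i) div p) * x ^ i * y ^ (p - i))"
      by (simp add: sum_distrib_left mult.assoc)
    have "{..p} = insert 0 (insert p {1..<p})"
      using \<open>p \<noteq> 0\<close> by auto
    then have "(x + y) ^ p = (\<Sum>i\<in>insert 0 (insert p {1..<p}). of_nat (p choose i) * x ^ i * y ^ (p - i))"
      by (simp only: binomial_ring)
    also have "\<dots> = x ^ p + y ^ p + (\<Sum>i\<in>{1..<p}. of_nat (p choose i) * x ^ i * y ^ (p - i))"
      using \<open>p \<noteq> 0\<close> by (simp add: algebra_simps)
    finally show ?thesis
      unfolding phi_def \<delta>_add binomial_middle by (simp add: algebra_simps)
  qed
  moreover have "phi p \<delta> (x * y) = phi p \<delta> x * phi p \<delta> y" for x y :: 'a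
    unfolding phi_def \<delta>_mult by (simp add: algebra_simps power_mult_distrib)
  ultimately show ?thesis
    using \<open>\<delta> 1 = 0\<close> by (simp add: ring_endo_def phi_def)
qed

lemma derived_complete_elt_one_minus_unit:
  assumes "derived_complete_elt f"
  shows "\<exists>u. (1 - f) * u = 1"
proof -
  have "\<exists>!x. \<forall>k. x k - f * x (Suc k) = 1"
    using assms unfolding derived_complete_elt_def by (rule allE[where x = "\<lambda>_. 1"])
  then obtain x where x: "\<forall>k. x k - f * x (Suc k) = 1"
    and unique: "\<And>y. \<forall>k. y k - f * y (Suc k) = 1 \<Longrightarrow> y = x"
    by (elim ex1E) blast
  have "(\<lambda>k. x (Suc k)) = x"
    using x by (intro unique) simp
  then have "x (Suc 0) = x 0"
    by (rule fun_cong)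
  with x have "(1 - f) * x 0 = 1"
    by (metis left_diff_distrib' mult_1)
  then show ?thesis ..
qed

lemma is_ideal_phiI: "is_ideal (phiI p \<delta> I i)"
  unfolding phiI_def by (rule is_ideal_ideal_gen)

lemma is_ideal_In: "is_ideal (In p \<delta> I n)"
  unfolding In_def by (rule is_ideal_ideal_gen)

lemma funpow_phi_mem_phiI:
  assumes "delta_ring p \<delta>" "x \<in> phiI p \<delta> I j"
  shows "(phi p \<delta> ^^ k) x \<in> phiI p \<delta> I (k + j)"
proof -
  have "(phi p \<delta> ^^ k) x \<in> ideal_gen ((phi p \<delta> ^^ k) ` (phi p \<delta> ^^ j) ` I)"
    using ring_endo_ideal_gen[OF ring_endo_funpow[OF ring_endo_phi[OF assms(1)]]] assms(2)
    unfolding phiI_def by blast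
  then show ?thesis
    unfolding phiI_def by (simp add: image_comp funpow_add)
qed

lemma In_subset_phiI:
  assumes "i \<le> n"
  shows "In p \<delta> I n \<subseteq> phiI p \<delta> I i"
  unfolding In_def
proof (rule ideal_gen_least[OF is_ideal_phiI], rule subsetI)
  fix f assume "f \<in> {\<Prod>i\<le>n. (phi p \<delta> ^^ i) (x i) | x. \<forall>i\<le>n. x i \<in> I}"
  then obtain x where x: "\<forall>i\<le>n. x i \<in> I" and f: "f = (\<Prod>i\<le>n. (phi p \<delta> ^^ i) (x i))"
    by blast
  have "f = (phi p \<delta> ^^ i) (x i) * (\<Prod>j\<in>{..n} - {i}. (phi p \<delta> ^^ j) (x j))"
    unfolding f using assms by (simp add: prod.remove)
  moreover have "(phi p \<delta> ^^ i) (x i) \<in> phiI p \<delta> I i"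
    unfolding phiI_def using x assms subset_ideal_gen by blast
  ultimately show "f \<in> phiI p \<delta> I i"
    by (metis is_ideal_mult_right is_ideal_phiI)
qed

lemma subset_In_0: "I \<subseteq> In p \<delta> I 0"
proof
  fix z assume "z \<in> I"
  moreover have "z = (\<Prod>i\<le>0. (phi p \<delta> ^^ i) ((\<lambda>_. z) i))"
    by simp
  ultimately have "z \<in> {\<Prod>i\<le>0. (phi p \<delta> ^^ i) (x i) | x. \<forall>i\<le>0. x i \<in> I}"
    by (intro CollectI exI[of _ "\<lambda>_. z"] conjI) auto
  then show "z \<in> In p \<delta> I 0"
    unfolding In_def by (rule subsetD[OF subset_ideal_gen])
qed

lemma In_mult_funpow_phi:
  assumes "z \<in> I" "f \<in> In p \<delta> I k"
  shows "f * (phi p \<delta> ^^ Suc k) z \<in> In p \<delta> I (Suc k)"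
proof -
  let ?v = "(phi p \<delta> ^^ Suc k) z"
  have "is_ideal {f. f * ?v \<in> In p \<delta> I (Suc k)}"
    by (rule is_ideal_vimage_mult[OF is_ideal_In])
  moreover have "{\<Prod>i\<le>k. (phi p \<delta> ^^ i) (x i) | x. \<forall>i\<le>k. x i \<in> I} \<subseteq> {f. f * ?v \<in> In p \<delta> I (Suc k)}"
  proof
    fix f assume "f \<in> {\<Prod>i\<le>k. (phi p \<delta> ^^ i) (x i) | x. \<forall>i\<le>k. x i \<in> I}"
    then obtain x where x: "\<forall>i\<le>k. x i \<in> I" and f: "f = (\<Prod>i\<le>k. (phi p \<delta> ^^ i) (x i))"
      by blast
    define x' where "x' = x(Suc k := z)"
    have "(\<Prod>i\<le>k. (phi p \<delta> ^^ i) (x' i)) = f"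
      unfolding f x'_def by (intro prod.cong) auto
    then have "f * ?v = (\<Prod>i\<le>Suc k. (phi p \<delta> ^^ i) (x' i))"
      by (simp add: x'_def)
    moreover have "\<forall>i\<le>Suc k. x' i \<in> I"
      using x assms(1) by (auto simp: x'_def le_Suc_eq)
    ultimately have "f * ?v \<in> {\<Prod>i\<le>Suc k. (phi p \<delta> ^^ i) (x i) | x. \<forall>i\<le>Suc k. x i \<in> I}"
      by (intro CollectI exI[of _ x'] conjI)
    then have "f * ?v \<in> In p \<delta> I (Suc k)"
      unfolding In_def by (rule subsetD[OF subset_ideal_gen])
    then show "f \<in> {f. f * ?v \<in> In p \<delta> I (Suc k)}"
      by simp
  qed
  ultimately have "In p \<delta> I k \<subseteq> {f. f * ?v \<in> In p \<delta> I (Suc k)}"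
    unfolding In_def[of p \<delta> I k] by (rule ideal_gen_least)
  with assms(2) show ?thesis
    by blast
qed

definition phiI_pth_powers :: "nat \<Rightarrow> ('a::comm_ring_1 \<Rightarrow> 'a) \<Rightarrow> 'a set \<Rightarrow> nat \<Rightarrow> 'a set" where
  "phiI_pth_powers p \<delta> I k = ideal_gen ((\<lambda>z. (phi p \<delta> ^^ k) z ^ p) ` I)"

lemma is_ideal_phiI_pth_powers: "is_ideal (phiI_pth_powers p \<delta> I k)"
  unfolding phiI_pth_powers_def by (rule is_ideal_ideal_gen)

lemma pth_power_mem_phiI_pth_powers: "z \<in> I \<Longrightarrow> (phi p \<delta> ^^ k) z ^ p \<in> phiI_pth_powers p \<delta> I k"
  unfolding phiI_pth_powers_def by (rule subsetD[OF subset_ideal_gen], rule image_eqI[OF refl])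

lemma funpow_phi_mem_phiI_pth_powers:
  assumes "delta_ring p \<delta>" "x \<in> phiI_pth_powers p \<delta> I k"
  shows "(phi p \<delta> ^^ j) x \<in> phiI_pth_powers p \<delta> I (j + k)"
proof -
  have endo: "ring_endo (phi p \<delta> ^^ j)"
    using ring_endo_funpow[OF ring_endo_phi[OF assms(1)]] .
  have "(phi p \<delta> ^^ j) x \<in> ideal_gen ((phi p \<delta> ^^ j) ` (\<lambda>z. (phi p \<delta> ^^ k) z ^ p) ` I)"
    using ring_endo_ideal_gen[OF endo] assms(2) unfolding phiI_pth_powers_def by blast
  then show ?thesis
    unfolding phiI_pth_powers_def by (simp add: image_comp funpow_add ring_endo_power[OF endo])
qed

lemma phiI_pth_powers_0_subset:
  assumes "is_ideal I" "p \<noteq> 0"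
  shows "phiI_pth_powers p \<delta> I 0 \<subseteq> I"
  unfolding phiI_pth_powers_def
  by (rule ideal_gen_least[OF assms(1)]) (use is_ideal_power[OF assms(1)] assms(2) in auto)

lemma phiI_Suc_subset:
  "phiI p \<delta> I (Suc k) \<subseteq> phiI_pth_powers p \<delta> I k + range ((*) (of_nat p))"
  unfolding phiI_def
proof (rule ideal_gen_least[OF is_ideal_set_plus[OF is_ideal_phiI_pth_powers is_ideal_range_mult]],
    rule image_subsetI)
  fix z assume "z \<in> I"
  then have "(phi p \<delta> ^^ k) z ^ p \<in> phiI_pth_powers p \<delta> I k"
    by (rule pth_power_mem_phiI_pth_powers)
  then show "(phi p \<delta> ^^ Suc k) z \<in> phiI_pth_powers p \<delta> I k + range ((*) (of_nat p))"
    by (auto simp: phi_def)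
qed

lemma phiI_pth_powers_Suc_subset:
  "phiI_pth_powers p \<delta> I (Suc k) \<subseteq> phiI_pth_powers p \<delta> I k + range ((*) (of_nat p ^ p))"
  unfolding phiI_pth_powers_def[of p \<delta> I "Suc k"]
proof (rule ideal_gen_least[OF is_ideal_set_plus[OF is_ideal_phiI_pth_powers is_ideal_range_mult]],
    rule image_subsetI)
  fix z assume "z \<in> I"
  define w where "w = (phi p \<delta> ^^ k) z"
  have "(w ^ p + of_nat p * \<delta> w) - of_nat p * \<delta> w \<in> phiI_pth_powers p \<delta> I k"
    using pth_power_mem_phiI_pth_powers[OF \<open>z \<in> I\<close>] by (simp add: w_def)
  then have "(w ^ p + of_nat p * \<delta> w) ^ p - (of_nat p * \<delta> w) ^ p \<in> phiI_pth_powers p \<delta> I k"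
    by (rule is_ideal_power_diff[OF is_ideal_phiI_pth_powers])
  moreover have "(phi p \<delta> ^^ Suc k) z ^ p
      = ((w ^ p + of_nat p * \<delta> w) ^ p - (of_nat p * \<delta> w) ^ p) + of_nat p ^ p * \<delta> w ^ p"
    by (simp add: w_def phi_def power_mult_distrib)
  ultimately show "(phi p \<delta> ^^ Suc k) z ^ p \<in> phiI_pth_powers p \<delta> I k + range ((*) (of_nat p ^ p))"
    by (metis rangeI set_plus_intro)
qed

section \<open>Transversal prisms\<close>

context
  fixes p :: nat and \<delta> :: "'a::comm_ring_1 \<Rightarrow> 'a" and I :: "'a set"
  assumes transversal: "transversal_prism p \<delta> I"
begin

lemma transversal_prism_delta_ring: "delta_ring p \<delta>"
  using transversal by (simp add: transversal_prism_def prism_def)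

lemma transversal_prism_is_ideal: "is_ideal I"
  using transversal by (simp add: transversal_prism_def prism_def)

lemma transversal_prism_p_ge_2: "p \<ge> 2"
  using transversal_prism_delta_ring by (simp add: delta_ring_def prime_ge_2_nat)

lemma transversal_prism_one_minus_unit:
  assumes "f \<in> ideal_gen (insert (of_nat p) I)"
  shows "\<exists>u. (1 - f) * u = 1"
  using transversal assms derived_complete_elt_one_minus_unit
  unfolding transversal_prism_def prism_def derived_complete_def by blast

lemma one_minus_p_power_mult_unit: "\<exists>u. (1 - of_nat p ^ (p - 1) * (c :: 'a)) * u = 1"
proof -
  have "of_nat p \<in> ideal_gen (insert (of_nat p) I)"
    by (rule subsetD[OF subset_ideal_gen]) simp
  then have "of_nat p ^ (p - 1) \<in> ideal_gen (insert (of_nat p) I)"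
    using is_ideal_power[OF is_ideal_ideal_gen, of "of_nat p" _ "p - 1"] transversal_prism_p_ge_2 by simp
  then have "of_nat p ^ (p - 1) * c \<in> ideal_gen (insert (of_nat p) I)"
    by (rule is_ideal_mult_right[OF is_ideal_ideal_gen])
  then show ?thesis
    by (rule transversal_prism_one_minus_unit)
qed

lemma p_mem_phiI_pth_powers_0_plus_phiI_1:
  "of_nat p \<in> phiI_pth_powers p \<delta> I 0 + phiI p \<delta> I 1"
proof -
  obtain x y where x: "x \<in> I" and y: "y \<in> phiI p \<delta> I 1" and "of_nat p = x + y"
    using transversal by (auto simp: transversal_prism_def prism_def)
  have "y \<in> phiI_pth_powers p \<delta> I 0 + range ((*) (of_nat p))"
    using y phiI_Suc_subset[of p \<delta> I 0] by auto
  then obtain g b where g: "g \<in> phiI_pth_powers p \<delta> I 0" and "y = g + of_nat p * b"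
    by (metis set_plus_elim rangeE)
  have "of_nat p * (1 - b) = x + g"
    using \<open>of_nat p = x + y\<close> \<open>y = g + of_nat p * b\<close> by (simp add: algebra_simps)
  moreover have "x + g \<in> I"
    using x g phiI_pth_powers_0_subset[OF transversal_prism_is_ideal, of p \<delta>] transversal_prism_p_ge_2
    by (intro is_ideal_add[OF transversal_prism_is_ideal]) auto
  ultimately have "1 - b \<in> I"
    using transversal by (simp add: transversal_prism_def)
  then have "1 - b \<in> ideal_gen (insert (of_nat p) I)"
    using subset_ideal_gen by blast
  then obtain u where "b * u = 1"
    using transversal_prism_one_minus_unit by force
  moreover have "- (u * g) + u * y = of_nat p * (b * u)"
    using \<open>y = g + of_nat p * b\<close> by (simp add: algebra_simps)
  ultimately have "of_nat p = - (u * g) + u * y"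
    by simp
  moreover have "- (u * g) \<in> phiI_pth_powers p \<delta> I 0" "u * y \<in> phiI p \<delta> I 1"
    using g y by (simp_all add: is_ideal_uminus is_ideal_mult_left is_ideal_phiI_pth_powers is_ideal_phiI)
  ultimately show ?thesis
    by (metis set_plus_intro)
qed

lemma p_mem_phiI_pth_powers_plus_phiI_Suc:
  "of_nat p \<in> phiI_pth_powers p \<delta> I n + phiI p \<delta> I (Suc n)"
proof -
  obtain g y where "of_nat p = g + y" and g: "g \<in> phiI_pth_powers p \<delta> I 0" and y: "y \<in> phiI p \<delta> I 1"
    using p_mem_phiI_pth_powers_0_plus_phiI_1 by (auto elim: set_plus_elim)
  have endo: "ring_endo (phi p \<delta> ^^ n)"
    by (rule ring_endo_funpow[OF ring_endo_phi[OF transversal_prism_delta_ring]])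
  have "of_nat p = (phi p \<delta> ^^ n) (of_nat p)"
    by (simp add: ring_endo_of_nat[OF endo])
  also have "\<dots> = (phi p \<delta> ^^ n) g + (phi p \<delta> ^^ n) y"
    by (subst \<open>of_nat p = g + y\<close>) (rule ring_endo_add[OF endo])
  finally have "of_nat p = (phi p \<delta> ^^ n) g + (phi p \<delta> ^^ n) y" .
  moreover have "(phi p \<delta> ^^ n) g \<in> phiI_pth_powers p \<delta> I n"
    using funpow_phi_mem_phiI_pth_powers[OF transversal_prism_delta_ring g, of n] by simp
  moreover have "(phi p \<delta> ^^ n) y \<in> phiI p \<delta> I (Suc n)"
    using funpow_phi_mem_phiI[OF transversal_prism_delta_ring y, of n] by simp
  ultimately show ?thesis
    by (metis set_plus_intro)
qed

lemma p_mem_phiI_pth_powers_plus_descend: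
  assumes "is_ideal K" "of_nat p \<in> phiI_pth_powers p \<delta> I (Suc k) + K"
  shows "of_nat p \<in> phiI_pth_powers p \<delta> I k + K"
proof -
  obtain g \<kappa> where "of_nat p = g + \<kappa>" "g \<in> phiI_pth_powers p \<delta> I (Suc k)" and \<kappa>: "\<kappa> \<in> K"
    using assms(2) by (auto elim: set_plus_elim)
  then have "g \<in> phiI_pth_powers p \<delta> I k + range ((*) (of_nat p ^ p))"
    using phiI_pth_powers_Suc_subset by blast
  then obtain g' c where g': "g' \<in> phiI_pth_powers p \<delta> I k" and "g = g' + of_nat p ^ p * c"
    by (metis set_plus_elim rangeE)
  obtain u where u: "(1 - of_nat p ^ (p - 1) * c) * u = 1"
    using one_minus_p_power_mult_unit by blast
  have "g' + \<kappa> = (g - of_nat p ^ p * c) + \<kappa>"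
    using \<open>g = g' + of_nat p ^ p * c\<close> by simp
  also have "\<dots> = of_nat p - of_nat p ^ p * c"
    using \<open>of_nat p = g + \<kappa>\<close> by (simp add: algebra_simps)
  also have "of_nat p ^ p = of_nat p * (of_nat p ^ (p - 1) :: 'a)"
    using transversal_prism_p_ge_2 by (simp flip: power_Suc)
  finally have "of_nat p * (1 - of_nat p ^ (p - 1) * c) = g' + \<kappa>"
    by (simp add: right_diff_distrib mult.assoc)
  then have "u * g' + u * \<kappa> = of_nat p * ((1 - of_nat p ^ (p - 1) * c) * u)"
    by (simp flip: distrib_left) (simp add: ac_simps)
  then have "of_nat p = u * g' + u * \<kappa>"
    using u by simp
  moreover have "u * g' \<in> phiI_pth_powers p \<delta> I k" "u * \<kappa> \<in> K"
    using g' \<kappa> assms(1) by (simp_all add: is_ideal_mult_left is_ideal_phiI_pth_powers)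
  ultimately show ?thesis
    by (metis set_plus_intro)
qed

lemma p_mem_phiI_pth_powers_plus_phiI:
  assumes "k \<le> n"
  shows "of_nat p \<in> phiI_pth_powers p \<delta> I k + phiI p \<delta> I (Suc n)"
  using assms
proof (induction k rule: inc_induct)
  case base
  show ?case
    by (rule p_mem_phiI_pth_powers_plus_phiI_Suc)
next
  case (step k)
  show ?case
    by (rule p_mem_phiI_pth_powers_plus_descend[OF is_ideal_phiI step(3)])
qed

lemma pth_power_funpow_phi_Suc_mem_In_plus_phiI:
  assumes "z \<in> I" "Suc k \<le> n"
    and IH: "phiI_pth_powers p \<delta> I k \<subseteq> In p \<delta> I k + phiI p \<delta> I (Suc n)"
  shows "(phi p \<delta> ^^ Suc k) z ^ p \<in> In p \<delta> I (Suc k) + phiI p \<delta> I (Suc n)"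
proof -
  let ?K = "phiI p \<delta> I (Suc n)"
  define w where "w = (phi p \<delta> ^^ k) z"
  define v where "v = (phi p \<delta> ^^ Suc k) z"
  obtain g \<kappa> where "of_nat p = g + \<kappa>" and g: "g \<in> phiI_pth_powers p \<delta> I k" and "\<kappa> \<in> ?K"
    using p_mem_phiI_pth_powers_plus_phiI[of k n] assms(2) by (auto elim: set_plus_elim)
  define h where "h = w ^ p + g * \<delta> w"
  have "h \<in> phiI_pth_powers p \<delta> I k"
    unfolding h_def w_def using pth_power_mem_phiI_pth_powers[OF \<open>z \<in> I\<close>] g
    by (intro is_ideal_add[OF is_ideal_phiI_pth_powers] is_ideal_mult_right[OF is_ideal_phiI_pth_powers])
  then have "h ^ (p - 1) \<in> phiI_pth_powers p \<delta> I k"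
    using is_ideal_power[OF is_ideal_phiI_pth_powers, of h] transversal_prism_p_ge_2 by simp
  then have "h ^ (p - 1) \<in> In p \<delta> I k + ?K"
    using IH by blast
  then obtain f \<kappa>' where "h ^ (p - 1) = f + \<kappa>'" and f: "f \<in> In p \<delta> I k" and "\<kappa>' \<in> ?K"
    by (auto elim: set_plus_elim)
  \<comment> \<open>modulo ?K: v \<equiv> h and h^(p-1) \<equiv> f, hence v^p \<equiv> f v, and f v lies in I_(k+1)\<close>
  have "v - h = \<kappa> * \<delta> w"
    using \<open>of_nat p = g + \<kappa>\<close> by (simp add: v_def w_def h_def phi_def algebra_simps)
  then have "v - h \<in> ?K"
    using \<open>\<kappa> \<in> ?K\<close> by (simp add: is_ideal_mult_right[OF is_ideal_phiI])
  then have "v ^ (p - 1) - h ^ (p - 1) \<in> ?K"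
    by (rule is_ideal_power_diff[OF is_ideal_phiI])
  then have rest: "v * (\<kappa>' + (v ^ (p - 1) - h ^ (p - 1))) \<in> ?K"
    using \<open>\<kappa>' \<in> ?K\<close> by (intro is_ideal_mult_left[OF is_ideal_phiI] is_ideal_add[OF is_ideal_phiI])
  have "v ^ p = v * v ^ (p - 1)"
    using transversal_prism_p_ge_2 by (simp flip: power_Suc)
  also have "\<dots> = f * v + v * (\<kappa>' + (v ^ (p - 1) - h ^ (p - 1)))"
    unfolding \<open>h ^ (p - 1) = f + \<kappa>'\<close> by (simp add: algebra_simps)
  finally have "v ^ p = f * v + v * (\<kappa>' + (v ^ (p - 1) - h ^ (p - 1)))" .
  moreover have "f * v \<in> In p \<delta> I (Suc k)"
    unfolding v_def by (rule In_mult_funpow_phi[OF \<open>z \<in> I\<close> f])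
  ultimately show ?thesis
    using rest unfolding v_def by (metis set_plus_intro)
qed

lemma phiI_pth_powers_subset_In_plus_phiI:
  assumes "k \<le> n"
  shows "phiI_pth_powers p \<delta> I k \<subseteq> In p \<delta> I k + phiI p \<delta> I (Suc n)"
  using assms
proof (induction k)
  case 0
  show ?case
    unfolding phiI_pth_powers_def
  proof (rule ideal_gen_least[OF is_ideal_set_plus[OF is_ideal_In is_ideal_phiI]], rule image_subsetI)
    fix z assume "z \<in> I"
    then have "(phi p \<delta> ^^ 0) z ^ p \<in> In p \<delta> I 0"
      using subset_In_0[of I p \<delta>] is_ideal_power[OF is_ideal_In, of z p \<delta> I 0 p]
        transversal_prism_p_ge_2 by auto
    then show "(phi p \<delta> ^^ 0) z ^ p \<in> In p \<delta> I 0 + phiI p \<delta> I (Suc n)"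
      using set_plus_intro[OF _ is_ideal_zero[OF is_ideal_phiI]] by fastforce
  qed
next
  case (Suc k)
  then show ?case
    unfolding phiI_pth_powers_def[of p \<delta> I "Suc k"]
    by (intro ideal_gen_least[OF is_ideal_set_plus[OF is_ideal_In is_ideal_phiI]] image_subsetI
        pth_power_funpow_phi_Suc_mem_In_plus_phiI) simp_all
qed

lemma p_mem_In_plus_phiI: "of_nat p \<in> In p \<delta> I n + phiI p \<delta> I (Suc n)"
proof -
  obtain g \<kappa> where "of_nat p = g + \<kappa>" "g \<in> phiI_pth_powers p \<delta> I n" and \<kappa>: "\<kappa> \<in> phiI p \<delta> I (Suc n)"
    using p_mem_phiI_pth_powers_plus_phiI[of n n] by (auto elim: set_plus_elim)
  then have "g \<in> In p \<delta> I n + phiI p \<delta> I (Suc n)"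
    using phiI_pth_powers_subset_In_plus_phiI[of n n] by blast
  then obtain f \<kappa>' where "g = f + \<kappa>'" "f \<in> In p \<delta> I n" and \<kappa>': "\<kappa>' \<in> phiI p \<delta> I (Suc n)"
    by (auto elim: set_plus_elim)
  have "of_nat p = f + (\<kappa>' + \<kappa>)"
    using \<open>of_nat p = g + \<kappa>\<close> \<open>g = f + \<kappa>'\<close> by (simp add: add.assoc)
  moreover have "\<kappa>' + \<kappa> \<in> phiI p \<delta> I (Suc n)"
    using \<kappa> \<kappa>' by (rule is_ideal_add[OF is_ideal_phiI, rotated])
  ultimately show ?thesis
    using \<open>f \<in> In p \<delta> I n\<close> by (metis set_plus_intro)
qed

lemma Vstep_spec:
  "(\<forall>i\<le>n. Vstep p \<delta> I n a - of_nat p * a \<in> phiI p \<delta> I i) \<and> Vstep p \<delta> I n a \<in> phiI p \<delta> I (Suc n)"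
proof -
  obtain f e where "of_nat p = f + e" and f: "f \<in> In p \<delta> I n" and e: "e \<in> phiI p \<delta> I (Suc n)"
    using p_mem_In_plus_phiI[of n] by (auto elim: set_plus_elim)
  have "(\<forall>i\<le>n. e * a - of_nat p * a \<in> phiI p \<delta> I i) \<and> e * a \<in> phiI p \<delta> I (Suc n)"
  proof (intro conjI allI impI)
    fix i assume "i \<le> n"
    then have "f \<in> phiI p \<delta> I i"
      using f In_subset_phiI by blast
    then have "- (f * a) \<in> phiI p \<delta> I i"
      by (intro is_ideal_uminus[OF is_ideal_phiI] is_ideal_mult_right[OF is_ideal_phiI])
    then show "e * a - of_nat p * a \<in> phiI p \<delta> I i"
      using \<open>of_nat p = f + e\<close> by (simp add: algebra_simps)
  next
    show "e * a \<in> phiI p \<delta> I (Suc n)"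
      using e by (rule is_ideal_mult_right[OF is_ideal_phiI])
  qed
  then show ?thesis
    unfolding Vstep_def by (rule someI)
qed

lemma Nstep_spec:
  "(\<forall>i\<le>n. Nstep p \<delta> I n a - a ^ p \<in> phiI p \<delta> I i) \<and>
    Nstep p \<delta> I n a - phi p \<delta> a \<in> phiI p \<delta> I (Suc n)"
proof -
  obtain f e where "of_nat p = f + e" and f: "f \<in> In p \<delta> I n" and e: "e \<in> phiI p \<delta> I (Suc n)"
    using p_mem_In_plus_phiI[of n] by (auto elim: set_plus_elim)
  have "(\<forall>i\<le>n. (a ^ p + f * \<delta> a) - a ^ p \<in> phiI p \<delta> I i) \<and>
      (a ^ p + f * \<delta> a) - phi p \<delta> a \<in> phiI p \<delta> I (Suc n)"
  proof (intro conjI allI impI)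
    fix i assume "i \<le> n"
    then have "f \<in> phiI p \<delta> I i"
      using f In_subset_phiI by blast
    then show "(a ^ p + f * \<delta> a) - a ^ p \<in> phiI p \<delta> I i"
      by (simp add: is_ideal_mult_right[OF is_ideal_phiI])
  next
    have "- (e * \<delta> a) \<in> phiI p \<delta> I (Suc n)"
      using e by (intro is_ideal_uminus[OF is_ideal_phiI] is_ideal_mult_right[OF is_ideal_phiI])
    then show "(a ^ p + f * \<delta> a) - phi p \<delta> a \<in> phiI p \<delta> I (Suc n)"
      using \<open>of_nat p = f + e\<close> by (simp add: phi_def algebra_simps)
  qed
  then show ?thesis
    unfolding Nstep_def by (rule someI)
qed

lemma Vcomp_cong:
  assumes "j \<le> L"
  shows "Vcomp p \<delta> I L i b - of_nat p ^ i * b \<in> phiI p \<delta> I j"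
proof (induction i)
  case 0
  show ?case
    by (simp add: is_ideal_zero[OF is_ideal_phiI])
next
  case (Suc i)
  let ?V = "Vcomp p \<delta> I L i b"
  have "Vstep p \<delta> I (L + i) ?V - of_nat p * ?V \<in> phiI p \<delta> I j"
    using Vstep_spec assms by simp
  moreover have "of_nat p * ?V - of_nat p * (of_nat p ^ i * b) \<in> phiI p \<delta> I j"
    using Suc.IH by (rule is_ideal_mult_diff[OF is_ideal_phiI])
  ultimately show ?case
    using is_ideal_add[OF is_ideal_phiI] by (fastforce simp: mult.assoc)
qed

lemma Vcomp_mem:
  assumes "L < j" "j \<le> L + i"
  shows "Vcomp p \<delta> I L i b \<in> phiI p \<delta> I j"
  using assms(2)
proof (induction i)
  case 0
  with assms(1) show ?case
    by simp
next
  case (Suc i)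
  let ?V = "Vcomp p \<delta> I L i b"
  show ?case
  proof (cases "j \<le> L + i")
    case True
    have "Vstep p \<delta> I (L + i) ?V - of_nat p * ?V \<in> phiI p \<delta> I j"
      using Vstep_spec True by simp
    moreover have "of_nat p * ?V \<in> phiI p \<delta> I j"
      using Suc.IH True by (simp add: is_ideal_mult_left[OF is_ideal_phiI])
    ultimately show ?thesis
      using is_ideal_add[OF is_ideal_phiI] by fastforce
  next
    case False
    then have "j = Suc (L + i)"
      using Suc.prems by simp
    then show ?thesis
      using Vstep_spec by simp
  qed
qed

lemma Ncomp_cong:
  assumes "i \<le> n + d"
  shows "Ncomp p \<delta> I n d a - (phi p \<delta> ^^ (i - n)) a ^ p ^ (d - (i - n)) \<in> phiI p \<delta> I i"
  using assms
proof (induction d arbitrary: i)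
  case 0
  then show ?case
    by (simp add: is_ideal_zero[OF is_ideal_phiI])
next
  case (Suc d)
  let ?N = "Ncomp p \<delta> I n d a"
  show ?case
  proof (cases "i \<le> n + d")
    case True
    let ?x = "(phi p \<delta> ^^ (i - n)) a ^ p ^ (d - (i - n))"
    have "Nstep p \<delta> I (n + d) ?N - ?N ^ p \<in> phiI p \<delta> I i"
      using Nstep_spec True by simp
    moreover have "?N ^ p - ?x ^ p \<in> phiI p \<delta> I i"
      using Suc.IH[OF True] by (rule is_ideal_power_diff[OF is_ideal_phiI])
    moreover have "?x ^ p = (phi p \<delta> ^^ (i - n)) a ^ p ^ (Suc d - (i - n))"
      using True by (simp add: Suc_diff_le power_mult[symmetric] mult.commute)
    ultimately show ?thesis
      using is_ideal_add[OF is_ideal_phiI] by fastforce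
  next
    case False
    then have i: "i = Suc (n + d)"
      using Suc.prems by simp
    have "Nstep p \<delta> I (n + d) ?N - phi p \<delta> ?N \<in> phiI p \<delta> I i"
      using Nstep_spec i by simp
    moreover have "?N - (phi p \<delta> ^^ d) a \<in> phiI p \<delta> I (n + d)"
      using Suc.IH[of "n + d"] by simp
    then have "(phi p \<delta> ^^ 1) (?N - (phi p \<delta> ^^ d) a) \<in> phiI p \<delta> I (1 + (n + d))"
      by (rule funpow_phi_mem_phiI[OF transversal_prism_delta_ring])
    then have "phi p \<delta> ?N - (phi p \<delta> ^^ Suc d) a \<in> phiI p \<delta> I i"
      using i by (simp add: ring_endo_diff[OF ring_endo_phi[OF transversal_prism_delta_ring]])
    ultimately show ?thesis
      using is_ideal_add[OF is_ideal_phiI] i by fastforce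
  qed
qed

lemma cmap_summand_cong_ghost_summand:
  assumes "j \<le> n" "i \<le> m"
  shows "Vcomp p \<delta> I (m + n - i) i (Ncomp p \<delta> I n (m - i) (a i)) - of_nat p ^ i * a i ^ p ^ (m - i)
    \<in> phiI p \<delta> I j"
proof -
  let ?N = "Ncomp p \<delta> I n (m - i) (a i)"
  have "Vcomp p \<delta> I (m + n - i) i ?N - of_nat p ^ i * ?N \<in> phiI p \<delta> I j"
    using assms by (intro Vcomp_cong) simp
  moreover have "of_nat p ^ i * ?N - of_nat p ^ i * a i ^ p ^ (m - i) \<in> phiI p \<delta> I j"
    using Ncomp_cong[of j n "m - i" "a i"] assms by (intro is_ideal_mult_diff[OF is_ideal_phiI]) simp
  ultimately show ?thesis
    using is_ideal_add[OF is_ideal_phiI] by fastforce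
qed

lemma cmap_summand_cong_funpow_ghost_summand:
  assumes "k \<le> m" "i \<le> m"
  shows "Vcomp p \<delta> I (m + n - i) i (Ncomp p \<delta> I n (m - i) (a i))
      - (if i \<le> m - k then of_nat p ^ i * (phi p \<delta> ^^ k) (a i) ^ p ^ (m - k - i) else 0)
    \<in> phiI p \<delta> I (n + k)"
proof (cases "i \<le> m - k")
  case True
  let ?N = "Ncomp p \<delta> I n (m - i) (a i)"
  have "Vcomp p \<delta> I (m + n - i) i ?N - of_nat p ^ i * ?N \<in> phiI p \<delta> I (n + k)"
    using True assms by (intro Vcomp_cong) simp
  moreover have "?N - (phi p \<delta> ^^ k) (a i) ^ p ^ (m - k - i) \<in> phiI p \<delta> I (n + k)"
    using Ncomp_cong[of "n + k" n "m - i" "a i"] True assms by (simp add: add.commute)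
  then have "of_nat p ^ i * ?N - of_nat p ^ i * (phi p \<delta> ^^ k) (a i) ^ p ^ (m - k - i)
      \<in> phiI p \<delta> I (n + k)"
    by (rule is_ideal_mult_diff[OF is_ideal_phiI])
  ultimately show ?thesis
    using True is_ideal_add[OF is_ideal_phiI] by fastforce
next
  case False
  then show ?thesis
    using Vcomp_mem[of "m + n - i" "n + k" i] assms by simp
qed

end

theorem lemma4p2:
  fixes p :: nat and \<delta> :: "'a::comm_ring_1 \<Rightarrow> 'a" and I :: "'a set"
    and m n :: nat and a :: "nat \<Rightarrow> 'a"
  assumes "transversal_prism p \<delta> I"
  shows "(\<forall>j\<le>n. cmap p \<delta> I m n a - ghost p a m \<in> phiI p \<delta> I j) \<and>
         (\<forall>k\<in>{1..m}. cmap p \<delta> I m n a - (phi p \<delta> ^^ k) (ghost p a (m - k)) \<in> phiI p \<delta> I (n + k))"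
proof (intro conjI allI impI ballI)
  fix j assume "j \<le> n"
  then have "cmap p \<delta> I m n a - (\<Sum>i\<le>m. of_nat p ^ i * a i ^ p ^ (m - i)) \<in> phiI p \<delta> I j"
    unfolding cmap_def using cmap_summand_cong_ghost_summand[OF assms]
    by (intro is_ideal_sum_diff[OF is_ideal_phiI]) simp
  then show "cmap p \<delta> I m n a - ghost p a m \<in> phiI p \<delta> I j"
    by (simp add: ghost_def)
next
  fix k assume "k \<in> {1..m}"
  have "cmap p \<delta> I m n a
      - (\<Sum>i\<le>m. if i \<le> m - k then of_nat p ^ i * (phi p \<delta> ^^ k) (a i) ^ p ^ (m - k - i) else 0)
    \<in> phiI p \<delta> I (n + k)"
    unfolding cmap_def using cmap_summand_cong_funpow_ghost_summand[OF assms] \<open>k \<in> {1..m}\<close>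
    by (intro is_ideal_sum_diff[OF is_ideal_phiI]) simp
  also have "(\<Sum>i\<le>m. if i \<le> m - k then of_nat p ^ i * (phi p \<delta> ^^ k) (a i) ^ p ^ (m - k - i) else 0)
      = ghost p ((phi p \<delta> ^^ k) \<circ> a) (m - k)"
    using ghost_eq_sum_if[of "m - k" m p "(phi p \<delta> ^^ k) \<circ> a"] by (simp only: comp_apply)
  also have "\<dots> = (phi p \<delta> ^^ k) (ghost p a (m - k))"
    using ring_endo_ghost[OF ring_endo_funpow[OF ring_endo_phi[OF transversal_prism_delta_ring[OF assms]]]] by simp
  finally show "cmap p \<delta> I m n a - (phi p \<delta> ^^ k) (ghost p a (m - k)) \<in> phiI p \<delta> I (n + k)" .
qed

end
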